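(* Let $\Omega=\Omega_1\setminus\overline{\Omega_2}$ be a doubly connected domain with $C^2$ boundary, let $d_1(w)=\operatorname{dist}(w,\partial\Omega_1)$, let $\kappa_0=\operatorname{ess\,sup}\{|\kappa_\zeta|:\zeta\in\partial\Omega_1\}$ where $\kappa_\zeta$ is the curvature of $\partial\Omega_1$ at $\zeta$, let $0<\mu<\kappa_0^{-1}$ and $\Gamma_\mu=\{w\in\Omega: d_1(w)\le\mu\}$. Let $D$ be a planar domain and $w\colon D\to\Omega$ a $(K,K')$-quasiconformal mapping, and set $\chi(z)=-d_1(w(z))$. Then for (almost) every $z\in w^{-1}(\Gamma_\mu)$ at which $w$ is differentiable, $$|\nabla\chi(z)|\le|Dw(z)|\le 2K|\nabla\chi(z)|+\sqrt{K'}.$$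
   Context: $|Dw(z)|=\max\{|Dw(z)h|:|h|=1\}=|w_z|+|w_{\bar z}|$ is the operator norm of the differential, $\|Dw\|^2=|w_x|^2+|w_y|^2=2|w_z|^2+2|w_{\bar z}|^2$, and $J(z,w)=|w_z|^2-|w_{\bar z}|^2$. A sense-preserving ACL mapping $w$ between planar domains is $(K,K')$-quasiconformal ($K\ge1$, $K'\ge0$) if $\|Dw\|^2\le 2KJ(z,w)+K'$ almost everywhere. On $\Gamma_\mu$ the function $d_1$ is $C^2$ with $|\nabla d_1|=1$. *)

theory Defs
  imports "HOL-Analysis.Analysis"
begin

definition abs_cont_on :: "(real \<Rightarrow> 'b::real_normed_vector) \<Rightarrow> real \<Rightarrow> real \<Rightarrow> bool" where
  "abs_cont_on f a b \<longleftrightarrow>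
     (\<forall>\<epsilon>>0. \<exists>\<delta>>0. \<forall>S. finite S \<and> (\<forall>(u,v)\<in>S. a \<le> u \<and> u < v \<and> v \<le> b)
        \<and> (\<forall>p\<in>S. \<forall>q\<in>S. p \<noteq> q \<longrightarrow> {fst p<..<snd p} \<inter> {fst q<..<snd q} = {})
        \<and> (\<Sum>(u,v)\<in>S. v - u) < \<delta>
        \<longrightarrow> (\<Sum>(u,v)\<in>S. norm (f v - f u)) < \<epsilon>)"

definition ACL_on :: "complex set \<Rightarrow> (complex \<Rightarrow> complex) \<Rightarrow> bool" where
  "ACL_on D w \<longleftrightarrow> continuous_on D w \<and>
     (\<forall>a b. cbox a b \<subseteq> D \<longrightarrow>
        (AE y in lebesgue. y \<in> {Im a..Im b} \<longrightarrow>
            abs_cont_on (\<lambda>x. w (Complex x y)) (Re a) (Re b)) \<and>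
        (AE x in lebesgue. x \<in> {Re a..Re b} \<longrightarrow>
            abs_cont_on (\<lambda>y. w (Complex x y)) (Im a) (Im b)))"

definition partials_at :: "(complex \<Rightarrow> complex) \<Rightarrow> complex \<Rightarrow> complex \<Rightarrow> complex \<Rightarrow> bool" where
  "partials_at w z wx wy \<longleftrightarrow>
     ((\<lambda>t. w (z + of_real t)) has_vector_derivative wx) (at 0) \<and>
     ((\<lambda>t. w (z + \<i> * of_real t)) has_vector_derivative wy) (at 0)"

text \<open>Jacobian J = |w_z|^2 - |w_zbar|^2 = Re w_x Im w_y - Im w_x Re w_y.\<close>
definition jac :: "complex \<Rightarrow> complex \<Rightarrow> real" where
  "jac wx wy = Im (cnj wx * wy)"

text \<open>(K,K')-quasiconformal: sense-preserving (J \<ge> 0 a.e.) ACL mapping with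
  ||Dw||^2 = |w_x|^2 + |w_y|^2 \<le> 2 K J + K' a.e.\<close>
definition KK_qc_on :: "real \<Rightarrow> real \<Rightarrow> complex set \<Rightarrow> (complex \<Rightarrow> complex) \<Rightarrow> bool" where
  "KK_qc_on K K' D w \<longleftrightarrow> K \<ge> 1 \<and> K' \<ge> 0 \<and> ACL_on D w \<and>
     (AE z in lebesgue. z \<in> D \<longrightarrow>
        (\<exists>wx wy. partials_at w z wx wy \<and> jac wx wy \<ge> 0 \<and>
           (norm wx)\<^sup>2 + (norm wy)\<^sup>2 \<le> 2 * K * jac wx wy + K'))"

definition C2_jordan_curve :: "(real \<Rightarrow> complex) \<Rightarrow> bool" where
  "C2_jordan_curve g \<longleftrightarrow> (\<forall>t. g (t + 1) = g t) \<and> simple_path g \<and>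
     (\<exists>g' g''. continuous_on UNIV g'' \<and>
        (\<forall>t. (g has_vector_derivative g' t) (at t) \<and>
             (g' has_vector_derivative g'' t) (at t) \<and> g' t \<noteq> 0))"

definition curvature :: "(real \<Rightarrow> complex) \<Rightarrow> real \<Rightarrow> real" where
  "curvature g t =
     (let g1 = vector_derivative g (at t);
          g2 = vector_derivative (\<lambda>s. vector_derivative g (at s)) (at t)
      in Im (cnj g1 * g2) / norm g1 ^ 3)"

end

theory Submission
  imports Defs
begin

(*
  Near z, the function \<chi> = -d\<^sub>1 \<circ> w is bounded below by the differentiable functions
  u \<mapsto> -|w u - \<zeta>| for the points \<zeta> of \<partial>\<Omega>\<^sub>1 nearest to w z, so every nearest point yields a
  Frechet subgradient of \<chi> at z. The set of points where a real function on the plane has two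
  distinct Frechet subgradients is null: it is a countable union of pieces on which the two
  subgradients stay separated, and each piece is a Lipschitz graph over a line. Off this null set
  all nearest points give the same subgradient, and compactness of \<partial>\<Omega>\<^sub>1 upgrades it to the
  derivative of \<chi>, namely h \<mapsto> -(p \<bullet> Dw h) for a unit vector p. The two inequalities are then
  linear algebra: |\<nabla>\<chi>| \<le> |Dw| since |p| = 1, and writing the Jacobian in the frame (p, ip) gives
  J \<le> |\<nabla>\<chi>| |Dw|, so quasiconformality yields |Dw|\<^sup>2 \<le> 2K |\<nabla>\<chi>| |Dw| + K'.
*)

section \<open>Points with two Frechet subgradients form a null set\<close>

lemma negligible_Lipschitz_graph_over_hyperplane:
  fixes S :: "'a::euclidean_space set"
  assumes "e \<noteq> 0"
    and transversal: "\<And>x y. x \<in> S \<Longrightarrow> y \<in> S \<Longrightarrow> \<bar>e \<bullet> (x - y)\<bar> \<le> norm e * norm (x - y) / 2"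
  shows "negligible S"
proof -
  define proj where "proj x = x - ((e \<bullet> x) / (norm e)\<^sup>2) *\<^sub>R e" for x
  have e2: "(norm e)\<^sup>2 > 0" using \<open>e \<noteq> 0\<close> by simp
  have norm_proj_diff: "(norm (proj x - proj y))\<^sup>2 + (e \<bullet> (x - y))\<^sup>2 / (norm e)\<^sup>2 = (norm (x - y))\<^sup>2"
    for x y
  proof -
    define t where "t = (e \<bullet> (x - y)) / (norm e)\<^sup>2"
    have "proj x - proj y = (x - y) - t *\<^sub>R e"
      by (simp add: proj_def t_def inner_diff_right diff_divide_distrib algebra_simps)
    moreover have "(norm (d - t *\<^sub>R e))\<^sup>2 = d \<bullet> d - 2 * t * (e \<bullet> d) + t\<^sup>2 * (e \<bullet> e)" for d
      unfolding power2_norm_eq_inner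
      by (simp add: inner_diff_left inner_commute[of d e] algebra_simps power2_eq_square)
    ultimately have "(norm (proj x - proj y))\<^sup>2
        = (norm (x - y))\<^sup>2 - 2 * t * (e \<bullet> (x - y)) + t\<^sup>2 * (norm e)\<^sup>2"
      by (simp add: power2_norm_eq_inner)
    then show ?thesis
      using \<open>e \<noteq> 0\<close> by (simp add: t_def field_simps power2_eq_square)
  qed
  have co_Lipschitz: "norm (x - y) \<le> 2 * norm (proj x - proj y)" if "x \<in> S" "y \<in> S" for x y
  proof -
    have "(e \<bullet> (x - y))\<^sup>2 \<le> (norm e * norm (x - y) / 2)\<^sup>2"
      using power_mono[OF transversal[OF that] abs_ge_zero, of 2] by simp
    then have "(e \<bullet> (x - y))\<^sup>2 / (norm e)\<^sup>2 \<le> (norm (x - y))\<^sup>2 / 4"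
      using e2 by (simp add: divide_le_eq power_mult_distrib power_divide mult.commute)
    then have "(norm (x - y))\<^sup>2 \<le> 4 * (norm (proj x - proj y))\<^sup>2"
      using norm_proj_diff[of x y] zero_le_power2[of "norm (x - y)"] by linarith
    then have "(norm (x - y))\<^sup>2 \<le> (2 * norm (proj x - proj y))\<^sup>2"
      by (simp add: power_mult_distrib)
    then show ?thesis by (rule power2_le_imp_le) simp
  qed
  have "inj_on proj S"
  proof (rule inj_onI)
    fix x y assume "x \<in> S" "y \<in> S" "proj x = proj y"
    then show "x = y" using co_Lipschitz[of x y] by simp
  qed
  then have "S = inv_into S proj ` proj ` S" by simp
  also have "negligible \<dots>"
  proof (rule negligible_locally_Lipschitz_image)
    show "negligible (proj ` S)"
      by (rule negligible_subset[OF negligible_hyperplane[of e 0]])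
        (use \<open>e \<noteq> 0\<close> e2 in \<open>auto simp: proj_def inner_diff_right power2_norm_eq_inner\<close>)
    show "\<exists>T B. open T \<and> y \<in> T \<and>
            (\<forall>y'\<in>proj ` S \<inter> T. norm (inv_into S proj y' - inv_into S proj y) \<le> B * norm (y' - y))"
      if "y \<in> proj ` S" for y
    proof (intro exI conjI ballI)
      fix y' assume "y' \<in> proj ` S \<inter> UNIV"
      then show "norm (inv_into S proj y' - inv_into S proj y) \<le> 2 * norm (y' - y)"
        using that co_Lipschitz \<open>inj_on proj S\<close> by auto
    qed auto
  qed simp
  finally show ?thesis .
qed

definition approx_subgradient :: "('a::real_inner \<Rightarrow> real) \<Rightarrow> real \<Rightarrow> real \<Rightarrow> 'a \<Rightarrow> 'a \<Rightarrow> bool"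
  where "approx_subgradient f \<delta> r z g \<longleftrightarrow>
    (\<forall>u. norm (u - z) < r \<longrightarrow> f z + g \<bullet> (u - z) - \<delta> * norm (u - z) \<le> f u)"

definition frechet_subgradient :: "('a::real_inner \<Rightarrow> real) \<Rightarrow> 'a \<Rightarrow> 'a \<Rightarrow> bool"
  where "frechet_subgradient f z g \<longleftrightarrow> (\<forall>\<delta>>0. \<exists>r>0. approx_subgradient f \<delta> r z g)"

lemma approx_subgradients_monotone:
  assumes "approx_subgradient f \<delta> r x g" "approx_subgradient f \<delta> r y h" "dist x y < r"
  shows "(g - h) \<bullet> (y - x) \<le> 2 * \<delta> * norm (y - x)"
proof -
  have "norm (y - x) < r" using assms(3) by (simp add: dist_norm norm_minus_commute)
  then have "f x + g \<bullet> (y - x) - \<delta> * norm (y - x) \<le> f y"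
    using assms(1) by (simp add: approx_subgradient_def)
  moreover have "f y + h \<bullet> (x - y) - \<delta> * norm (x - y) \<le> f x"
    using assms(2,3) by (simp add: approx_subgradient_def dist_norm)
  ultimately show ?thesis
    by (simp add: inner_diff_left inner_diff_right norm_minus_commute)
qed

definition subgradient_pair_set :: "('a::real_inner \<Rightarrow> real) \<Rightarrow> real \<Rightarrow> real \<Rightarrow> 'a \<Rightarrow> 'a \<Rightarrow> 'a \<Rightarrow> 'a set"
  where "subgradient_pair_set f \<delta> r q1 q2 c = {z \<in> ball c (r / 2). \<exists>g1 g2.
    dist g1 q1 < \<delta> \<and> dist g2 q2 < \<delta> \<and> approx_subgradient f \<delta> r z g1 \<and> approx_subgradient f \<delta> r z g2}"

lemma negligible_subgradient_pair_set:
  fixes q1 q2 c :: "'a::euclidean_space"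
  assumes "0 < \<delta>" "8 * \<delta> < norm (q1 - q2)"
  shows "negligible (subgradient_pair_set f \<delta> r q1 q2 c)" (is "negligible ?S")
proof (rule negligible_Lipschitz_graph_over_hyperplane)
  show "q1 - q2 \<noteq> 0" using assms by auto
  have approx: "\<bar>(g - q) \<bullet> d\<bar> \<le> \<delta> * norm d" if "dist g q < \<delta>" for g q d :: 'a
    using Cauchy_Schwarz_ineq2[of "g - q" d] that
    by (metis dist_norm mult_right_mono norm_ge_zero order_trans less_imp_le)
  have one_side: "(q1 - q2) \<bullet> (y - x) \<le> 4 * \<delta> * norm (y - x)" if "x \<in> ?S" "y \<in> ?S" for x y
  proof -
    obtain g1 where "dist g1 q1 < \<delta>" "approx_subgradient f \<delta> r x g1" using \<open>x \<in> ?S\<close> by (auto simp: subgradient_pair_set_def)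
    moreover obtain h2 where "dist h2 q2 < \<delta>" "approx_subgradient f \<delta> r y h2" using \<open>y \<in> ?S\<close> by (auto simp: subgradient_pair_set_def)
    moreover have "dist x y < r"
      using that dist_triangle_half_r[of c x r y] by (auto simp: subgradient_pair_set_def dist_commute)
    ultimately have "(g1 - h2) \<bullet> (y - x) \<le> 2 * \<delta> * norm (y - x)"
      and "\<bar>(g1 - q1) \<bullet> (y - x)\<bar> \<le> \<delta> * norm (y - x)" "\<bar>(h2 - q2) \<bullet> (y - x)\<bar> \<le> \<delta> * norm (y - x)"
      using approx_subgradients_monotone approx by blast+
    then show ?thesis by (simp add: inner_diff_left abs_le_iff)
  qed
  fix x y assume "x \<in> ?S" "y \<in> ?S"
  then have "\<bar>(q1 - q2) \<bullet> (x - y)\<bar> \<le> 4 * \<delta> * norm (x - y)"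
    using one_side[of x y] one_side[of y x]
    by (auto simp: abs_le_iff norm_minus_commute inner_diff_right)
  also have "\<dots> \<le> norm (q1 - q2) / 2 * norm (x - y)"
    using assms(2) by (intro mult_right_mono) auto
  finally show "\<bar>(q1 - q2) \<bullet> (x - y)\<bar> \<le> norm (q1 - q2) * norm (x - y) / 2"
    by simp
qed

lemma nonunique_frechet_subgradient_in_subgradient_pair_set:
  assumes dense: "\<And>x e. e > 0 \<Longrightarrow> \<exists>q\<in>Q. dist q x < e"
    and "g1 \<noteq> g2" "frechet_subgradient f z g1" "frechet_subgradient f z g2"
  shows "\<exists>m n q1 q2 c. q1 \<in> Q \<and> q2 \<in> Q \<and> c \<in> Q \<and> 8 * (1 / real (Suc m)) < norm (q1 - q2) \<and>
           z \<in> subgradient_pair_set f (1 / real (Suc m)) (1 / real (Suc n)) q1 q2 c"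
proof -
  obtain m :: nat where m: "10 / norm (g1 - g2) < real (Suc m)"
    using reals_Archimedean2 by (metis less_Suc_eq of_nat_less_iff order.strict_trans)
  define \<delta> where "\<delta> = 1 / real (Suc m)"
  have "\<delta> > 0" by (simp add: \<delta>_def)
  have "10 * \<delta> < norm (g1 - g2)"
    using m \<open>g1 \<noteq> g2\<close> by (simp add: \<delta>_def field_simps)
  obtain q1 q2 where q: "q1 \<in> Q" "q2 \<in> Q" "dist g1 q1 < \<delta>" "dist g2 q2 < \<delta>"
    using dense[OF \<open>\<delta> > 0\<close>] by (metis dist_commute)
  have "norm (g1 - g2) \<le> dist g1 q1 + norm (q1 - q2) + dist q2 g2"
    using dist_triangle[of g1 g2 q1] dist_triangle[of q1 g2 q2] by (simp add: dist_norm dist_commute)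
  then have "8 * \<delta> < norm (q1 - q2)"
    using q \<open>10 * \<delta> < norm (g1 - g2)\<close> by (simp add: dist_commute)
  obtain r1 r2 where r: "r1 > 0" "r2 > 0"
    "approx_subgradient f \<delta> r1 z g1" "approx_subgradient f \<delta> r2 z g2"
    using assms(3,4) \<open>\<delta> > 0\<close> unfolding frechet_subgradient_def by blast
  obtain n :: nat where n: "1 / real (Suc n) < min r1 r2"
    using reals_Archimedean r by (metis inverse_eq_divide min_less_iff_conj)
  obtain c where c: "c \<in> Q" "dist c z < 1 / real (Suc n) / 2"
    using dense[of "1 / real (Suc n) / 2"] by auto
  have "approx_subgradient f \<delta> (1 / real (Suc n)) z g1" "approx_subgradient f \<delta> (1 / real (Suc n)) z g2"
    using r n by (auto simp: approx_subgradient_def)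
  then have "z \<in> subgradient_pair_set f \<delta> (1 / real (Suc n)) q1 q2 c"
    using q c by (auto simp: subgradient_pair_set_def)
  then show ?thesis
    using q c \<open>8 * \<delta> < norm (q1 - q2)\<close> unfolding \<delta>_def by blast
qed

lemma negligible_nonunique_frechet_subgradient:
  fixes f :: "'a::euclidean_space \<Rightarrow> real"
  shows "negligible {z. \<exists>g1 g2. g1 \<noteq> g2 \<and> frechet_subgradient f z g1 \<and> frechet_subgradient f z g2}"
proof -
  obtain Q :: "'a set" where "countable Q" and dense: "\<And>U. open U \<Longrightarrow> U \<noteq> {} \<Longrightarrow> \<exists>q\<in>Q. q \<in> U"
    by (rule countable_dense_setE) blast
  have near: "\<exists>q\<in>Q. dist q x < e" if "e > 0" for x e
    using dense[of "ball x e"] that by (auto simp: dist_commute)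
  define piece where "piece = (\<lambda>(m, n, q1, q2, c).
    subgradient_pair_set f (1 / real (Suc m)) (1 / real (Suc n)) q1 q2 c)"
  define I :: "(nat \<times> nat \<times> 'a \<times> 'a \<times> 'a) set"
    where "I = {(m, n, q1, q2, c). q1 \<in> Q \<and> q2 \<in> Q \<and> c \<in> Q \<and> 8 * (1 / real (Suc m)) < norm (q1 - q2)}"
  have "countable (UNIV \<times> UNIV \<times> Q \<times> Q \<times> Q :: (nat \<times> nat \<times> 'a \<times> 'a \<times> 'a) set)"
    using \<open>countable Q\<close> by (intro countable_SIGMA) auto
  moreover have "I \<subseteq> UNIV \<times> UNIV \<times> Q \<times> Q \<times> Q" by (auto simp: I_def)
  ultimately have "countable I" by (rule countable_subset[rotated])
  moreover have "negligible (piece i)" if "i \<in> I" for i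
    using that by (auto simp: I_def piece_def intro!: negligible_subgradient_pair_set)
  ultimately have "negligible (\<Union> (piece ` I))"
    by (intro negligible_countable_Union) auto
  moreover have "{z. \<exists>g1 g2. g1 \<noteq> g2 \<and> frechet_subgradient f z g1 \<and> frechet_subgradient f z g2}
      \<subseteq> \<Union> (piece ` I)"
    using nonunique_frechet_subgradient_in_subgradient_pair_set[OF near]
    by (fastforce simp: I_def piece_def)
  ultimately show ?thesis by (rule negligible_subset)
qed

section \<open>Differentiability of the distance to a compact set along a map\<close>

lemma infdist_diff_le_inner_sgn:
  fixes x y :: "'a::real_inner"
  assumes "\<zeta> \<in> F" "dist y \<zeta> = infdist y F"
  shows "infdist x F - infdist y F \<le> sgn (x - \<zeta>) \<bullet> (x - y)"
proof -
  have "sgn v \<bullet> v = norm v" for v :: 'a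
    by (cases "v = 0") (simp_all add: sgn_div_norm power2_norm_eq_inner[symmetric] power2_eq_square)
  then have "infdist x F \<le> sgn (x - \<zeta>) \<bullet> (x - \<zeta>)"
    using infdist_le[OF assms(1), of x] by (simp add: dist_norm)
  moreover have "sgn (x - \<zeta>) \<bullet> (y - \<zeta>) \<le> infdist y F"
    using Cauchy_Schwarz_ineq2[of "sgn (x - \<zeta>)" "y - \<zeta>"] assms(2) infdist_nonneg[of y F]
    by (simp add: dist_norm norm_sgn abs_le_iff split: if_splits)
  ultimately show ?thesis by (simp add: inner_diff_right)
qed

lemma frechet_subgradient_neg_infdist_comp:
  fixes w :: "'a::euclidean_space \<Rightarrow> 'b::euclidean_space"
  assumes w: "(w has_derivative A) (at z)"
    and "\<zeta> \<in> F" "dist (w z) \<zeta> = infdist (w z) F" "w z \<noteq> \<zeta>"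
  shows "frechet_subgradient (\<lambda>u. - infdist (w u) F) z (- adjoint A (sgn (w z - \<zeta>)))"
  unfolding frechet_subgradient_def approx_subgradient_def
proof (intro allI impI)
  fix \<delta> :: real assume "\<delta> > 0"
  define p where "p = sgn (w z - \<zeta>)"
  have "((\<lambda>u. w u - \<zeta>) has_derivative A) (at z)"
    using has_derivative_diff[OF w has_derivative_const] by simp
  moreover have "(norm has_derivative (\<lambda>h. h \<bullet> p)) (at (w z - \<zeta>))"
    unfolding p_def using \<open>w z \<noteq> \<zeta>\<close> by (intro has_derivative_norm) simp
  ultimately have "((\<lambda>u. norm (w u - \<zeta>)) has_derivative (\<lambda>h. A h \<bullet> p)) (at z)"
    using has_derivative_compose by fastforce
  then obtain r where "r > 0" and r: "\<And>u. norm (u - z) < r \<Longrightarrow>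
      norm (norm (w u - \<zeta>) - norm (w z - \<zeta>) - A (u - z) \<bullet> p) \<le> \<delta> * norm (u - z)"
    using \<open>\<delta> > 0\<close> unfolding has_derivative_at_alt by blast
  have "linear A" using w has_derivative_linear by blast
  have "- infdist (w z) F - adjoint A p \<bullet> (u - z) - \<delta> * norm (u - z) \<le> - infdist (w u) F"
    if "norm (u - z) < r" for u
  proof -
    have "infdist (w u) F \<le> norm (w u - \<zeta>)"
      using infdist_le[OF \<open>\<zeta> \<in> F\<close>] by (simp add: dist_norm)
    moreover have "adjoint A p \<bullet> (u - z) = A (u - z) \<bullet> p"
      using adjoint_clauses(2)[OF \<open>linear A\<close>] by (simp add: inner_commute)
    ultimately show ?thesis
      using r[OF that] assms(3) by (simp add: dist_norm abs_le_iff)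
  qed
  then show "\<exists>r>0. \<forall>u. norm (u - z) < r \<longrightarrow> - infdist (w z) F + - adjoint A (sgn (w z - \<zeta>)) \<bullet> (u - z)
      - \<delta> * norm (u - z) \<le> - infdist (w u) F"
    using \<open>r > 0\<close> by (auto simp: p_def)
qed

lemma nearest_point_directions_usc:
  fixes F :: "'a::euclidean_space set"
  assumes "compact F" "x \<notin> F" "e > 0"
  shows "\<exists>r>0. \<forall>y \<zeta>. dist y x < r \<longrightarrow> \<zeta> \<in> F \<longrightarrow> dist y \<zeta> = infdist y F \<longrightarrow>
           (\<exists>\<zeta>'\<in>F. dist x \<zeta>' = infdist x F \<and> dist (sgn (x - \<zeta>)) (sgn (x - \<zeta>')) < e)"
proof (rule ccontr)
  assume contra: "\<not> ?thesis"
  have "\<forall>k. \<exists>y \<zeta>. dist y x < 1 / real (Suc k) \<and> \<zeta> \<in> F \<and> dist y \<zeta> = infdist y F \<and>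
               \<not> (\<exists>\<zeta>'\<in>F. dist x \<zeta>' = infdist x F \<and> dist (sgn (x - \<zeta>)) (sgn (x - \<zeta>')) < e)"
  proof
    fix k
    have "\<not> 1 / real (Suc k) \<le> 0" by simp
    then show "\<exists>y \<zeta>. dist y x < 1 / real (Suc k) \<and> \<zeta> \<in> F \<and> dist y \<zeta> = infdist y F \<and>
               \<not> (\<exists>\<zeta>'\<in>F. dist x \<zeta>' = infdist x F \<and> dist (sgn (x - \<zeta>)) (sgn (x - \<zeta>')) < e)"
      using contra unfolding not_ex not_all not_imp de_Morgan_conj not_less by blast
  qed
  then obtain y Z where y: "\<And>k. dist (y k) x < 1 / real (Suc k)"
    and Z: "\<And>k. Z k \<in> F" "\<And>k. dist (y k) (Z k) = infdist (y k) F"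
    and far: "\<And>k. \<not> (\<exists>\<zeta>'\<in>F. dist x \<zeta>' = infdist x F \<and> dist (sgn (x - Z k)) (sgn (x - \<zeta>')) < e)"
    unfolding choice_iff by blast
  obtain \<zeta> \<phi> where "\<zeta> \<in> F" "strict_mono \<phi>" and Z_lim: "(Z \<circ> \<phi>) \<longlonglongrightarrow> \<zeta>"
    using seq_compactE[OF compact_imp_seq_compact[OF \<open>compact F\<close>], of Z] Z(1) by blast
  have "(\<lambda>k. dist (y k) x) \<longlonglongrightarrow> 0"
  proof (rule Lim_null_comparison[OF _ LIMSEQ_inverse_real_of_nat])
    show "\<forall>\<^sub>F k in sequentially. norm (dist (y k) x) \<le> inverse (real (Suc k))"
      using y by (simp add: inverse_eq_divide less_imp_le)
  qed
  then have "y \<longlonglongrightarrow> x" by (rule tendsto_dist_iff[THEN iffD2])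
  then have y_lim: "(y \<circ> \<phi>) \<longlonglongrightarrow> x"
    using \<open>strict_mono \<phi>\<close> by (rule LIMSEQ_subseq_LIMSEQ)
  have "(\<lambda>k. dist (y (\<phi> k)) (Z (\<phi> k))) \<longlonglongrightarrow> dist x \<zeta>"
    using tendsto_dist[OF y_lim Z_lim] by (simp add: o_def)
  moreover have "(\<lambda>k. dist (y (\<phi> k)) (Z (\<phi> k))) \<longlonglongrightarrow> infdist x F"
    using tendsto_infdist[OF y_lim[unfolded o_def]] by (simp add: Z(2))
  ultimately have "dist x \<zeta> = infdist x F" by (rule LIMSEQ_unique)
  have "x - \<zeta> \<noteq> 0" using \<open>\<zeta> \<in> F\<close> \<open>x \<notin> F\<close> by auto
  then have "(\<lambda>k. sgn (x - Z (\<phi> k))) \<longlonglongrightarrow> sgn (x - \<zeta>)"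
    by (intro tendsto_sgn tendsto_diff tendsto_const Z_lim[unfolded o_def])
  then obtain k where "dist (sgn (x - Z (\<phi> k))) (sgn (x - \<zeta>)) < e"
    using \<open>e > 0\<close> by (auto simp: lim_sequentially)
  then show False
    using far[of "\<phi> k"] \<open>\<zeta> \<in> F\<close> \<open>dist x \<zeta> = infdist x F\<close> by blast
qed

lemma neg_infdist_le_affine:
  fixes x y :: "'a::real_inner"
  assumes "\<zeta> \<in> F" "dist y \<zeta> = infdist y F"
  shows "- infdist y F \<le> - infdist x F - q \<bullet> L + norm (sgn (x - \<zeta>) - q) * norm L + norm (y - x - L)"
proof -
  define p where "p = sgn (x - \<zeta>)"
  have "infdist x F - infdist y F \<le> p \<bullet> (x - y)"
    unfolding p_def using assms by (rule infdist_diff_le_inner_sgn)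
  moreover have "p \<bullet> (y - x) = q \<bullet> L + (p - q) \<bullet> L + p \<bullet> (y - x - L)"
    by (simp add: inner_diff_left inner_diff_right)
  moreover have "- ((p - q) \<bullet> L) \<le> norm (p - q) * norm L"
    using Cauchy_Schwarz_ineq2[of "p - q" L] by linarith
  moreover have "norm p \<le> 1" by (simp add: p_def norm_sgn)
  then have "- (p \<bullet> (y - x - L)) \<le> norm (y - x - L)"
    using Cauchy_Schwarz_ineq2[of p "y - x - L"]
      mult_left_le_one_le[OF norm_ge_zero[of "y - x - L"] norm_ge_zero[of p]] by linarith
  ultimately show ?thesis
    by (simp add: p_def inner_diff_left inner_diff_right inner_commute; linarith)
qed

lemma neg_infdist_comp_upper_estimate:
  fixes w :: "'a::euclidean_space \<Rightarrow> 'b::euclidean_space"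
  assumes w: "(w has_derivative A) (at z)" and "compact F" "F \<noteq> {}" "w z \<notin> F"
    and nearest: "\<And>\<zeta>. \<zeta> \<in> F \<Longrightarrow> dist (w z) \<zeta> = infdist (w z) F \<Longrightarrow> - adjoint A (sgn (w z - \<zeta>)) = g"
    and "\<epsilon> > 0"
  shows "\<exists>r>0. \<forall>u. norm (u - z) < r \<longrightarrow> - infdist (w u) F \<le> - infdist (w z) F + g \<bullet> (u - z) + \<epsilon> * norm (u - z)"
proof -
  have "bounded_linear A" using w by (rule has_derivative_bounded_linear)
  define B where "B = onorm A + 1" \<comment> \<open>a positive bound, since \<open>onorm A\<close> may vanish\<close>
  have "B > 0" using onorm_pos_le[OF \<open>bounded_linear A\<close>] by (simp add: B_def)
  obtain r1 where "r1 > 0" and r1: "\<And>y \<zeta>. dist y (w z) < r1 \<Longrightarrow> \<zeta> \<in> F \<Longrightarrow> dist y \<zeta> = infdist y F \<Longrightarrow>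
      \<exists>\<zeta>'\<in>F. dist (w z) \<zeta>' = infdist (w z) F \<and> dist (sgn (w z - \<zeta>)) (sgn (w z - \<zeta>')) < \<epsilon> / (2 * B)"
    using nearest_point_directions_usc[OF \<open>compact F\<close> \<open>w z \<notin> F\<close>, of "\<epsilon> / (2 * B)"] \<open>\<epsilon> > 0\<close> \<open>B > 0\<close>
    by auto
  obtain r2 where "r2 > 0" and r2: "\<And>u. dist u z < r2 \<Longrightarrow> dist (w u) (w z) < r1"
    using has_derivative_continuous[OF w] \<open>r1 > 0\<close> unfolding continuous_at_eps_delta by blast
  obtain r3 where "r3 > 0" and r3: "\<And>u. norm (u - z) < r3 \<Longrightarrow> norm (w u - w z - A (u - z)) \<le> \<epsilon> / 2 * norm (u - z)"
    using w \<open>\<epsilon> > 0\<close> unfolding has_derivative_at_alt by (meson half_gt_zero)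
  have "- infdist (w u) F \<le> - infdist (w z) F + g \<bullet> (u - z) + \<epsilon> * norm (u - z)"
    if u: "norm (u - z) < min r2 r3" for u
  proof -
    obtain \<zeta> where "\<zeta> \<in> F" "dist (w u) \<zeta> = infdist (w u) F"
      using infdist_attains_inf[OF compact_imp_closed[OF \<open>compact F\<close>] \<open>F \<noteq> {}\<close>] by metis
    moreover have "dist (w u) (w z) < r1" using u r2 by (simp add: dist_norm)
    ultimately obtain \<zeta>' where "\<zeta>' \<in> F" "dist (w z) \<zeta>' = infdist (w z) F"
      and close: "norm (sgn (w z - \<zeta>) - sgn (w z - \<zeta>')) < \<epsilon> / (2 * B)"
      using r1 by (auto simp: dist_norm)
    have "g = - adjoint A (sgn (w z - \<zeta>'))"
      using nearest[OF \<open>\<zeta>' \<in> F\<close> \<open>dist (w z) \<zeta>' = infdist (w z) F\<close>] by simp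
    then have "g \<bullet> (u - z) = - (sgn (w z - \<zeta>') \<bullet> A (u - z))"
      using adjoint_clauses(2)[OF bounded_linear.linear[OF \<open>bounded_linear A\<close>], of "sgn (w z - \<zeta>')" "u - z"]
      by simp
    moreover have "norm (A (u - z)) \<le> B * norm (u - z)"
      using onorm[OF \<open>bounded_linear A\<close>, of "u - z"] norm_ge_zero[of "u - z"]
      unfolding B_def distrib_right by linarith
    then have "norm (sgn (w z - \<zeta>) - sgn (w z - \<zeta>')) * norm (A (u - z)) \<le> \<epsilon> / (2 * B) * (B * norm (u - z))"
      using close \<open>\<epsilon> > 0\<close> \<open>B > 0\<close> by (intro mult_mono) auto
    ultimately show ?thesis
      using neg_infdist_le_affine[OF \<open>\<zeta> \<in> F\<close> \<open>dist (w u) \<zeta> = infdist (w u) F\<close>,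
          of "w z" "sgn (w z - \<zeta>')" "A (u - z)"] r3[of u] u \<open>B > 0\<close>
      by (simp add: inner_commute)
  qed
  then show ?thesis using \<open>r2 > 0\<close> \<open>r3 > 0\<close> by (intro exI[of _ "min r2 r3"]) auto
qed

lemma has_derivative_neg_infdist_comp:
  fixes w :: "'a::euclidean_space \<Rightarrow> 'b::euclidean_space"
  assumes w: "(w has_derivative A) (at z)" and "compact F" "F \<noteq> {}" "w z \<notin> F"
    and unique: "\<And>g1 g2. frechet_subgradient (\<lambda>u. - infdist (w u) F) z g1 \<Longrightarrow>
                         frechet_subgradient (\<lambda>u. - infdist (w u) F) z g2 \<Longrightarrow> g1 = g2"
  obtains p where "norm p = 1" "((\<lambda>u. - infdist (w u) F) has_derivative (\<lambda>h. - (p \<bullet> A h))) (at z)"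
proof -
  obtain \<zeta>0 where "\<zeta>0 \<in> F" "dist (w z) \<zeta>0 = infdist (w z) F"
    using infdist_attains_inf[OF compact_imp_closed[OF \<open>compact F\<close>] \<open>F \<noteq> {}\<close>] by metis
  define p where "p = sgn (w z - \<zeta>0)"
  define g where "g = - adjoint A p"
  have subgradient: "frechet_subgradient (\<lambda>u. - infdist (w u) F) z (- adjoint A (sgn (w z - \<zeta>)))"
    if "\<zeta> \<in> F" "dist (w z) \<zeta> = infdist (w z) F" for \<zeta>
    using that \<open>w z \<notin> F\<close> by (intro frechet_subgradient_neg_infdist_comp[OF w]) auto
  have nearest: "- adjoint A (sgn (w z - \<zeta>)) = g" if "\<zeta> \<in> F" "dist (w z) \<zeta> = infdist (w z) F" for \<zeta>
    using unique[OF subgradient[OF that] subgradient[OF \<open>\<zeta>0 \<in> F\<close> \<open>dist (w z) \<zeta>0 = infdist (w z) F\<close>]]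
    by (simp add: g_def p_def)
  note lower = subgradient[OF \<open>\<zeta>0 \<in> F\<close> \<open>dist (w z) \<zeta>0 = infdist (w z) F\<close>,
      folded p_def g_def, unfolded frechet_subgradient_def approx_subgradient_def]
  have "((\<lambda>u. - infdist (w u) F) has_derivative (\<lambda>h. g \<bullet> h)) (at z)"
    unfolding has_derivative_at_alt
  proof (intro conjI allI impI bounded_linear_inner_right)
    fix \<epsilon> :: real assume "\<epsilon> > 0"
    obtain r1 where "r1 > 0" and
      "\<And>u. norm (u - z) < r1 \<Longrightarrow> - infdist (w z) F + g \<bullet> (u - z) - \<epsilon> * norm (u - z) \<le> - infdist (w u) F"
      using lower \<open>\<epsilon> > 0\<close> by blast
    moreover obtain r2 where "r2 > 0" and
      "\<And>u. norm (u - z) < r2 \<Longrightarrow> - infdist (w u) F \<le> - infdist (w z) F + g \<bullet> (u - z) + \<epsilon> * norm (u - z)"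
      using neg_infdist_comp_upper_estimate[OF w \<open>compact F\<close> \<open>F \<noteq> {}\<close> \<open>w z \<notin> F\<close> nearest \<open>\<epsilon> > 0\<close>]
      by blast
    ultimately show "\<exists>d>0. \<forall>u. norm (u - z) < d \<longrightarrow>
        norm (- infdist (w u) F - - infdist (w z) F - g \<bullet> (u - z)) \<le> \<epsilon> * norm (u - z)"
      by (intro exI[of _ "min r1 r2"]) (force simp: abs_le_iff)
  qed
  moreover have "(\<lambda>h. g \<bullet> h) = (\<lambda>h. - (p \<bullet> A h))"
    using adjoint_clauses(2)[OF has_derivative_linear[OF w]] by (simp add: g_def)
  moreover have "norm p = 1"
    using \<open>\<zeta>0 \<in> F\<close> \<open>w z \<notin> F\<close> by (auto simp: p_def norm_sgn)
  ultimately show thesis using that by (simp only:)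
qed

section \<open>Operator norm estimates\<close>

lemma norm_adjoint_le_onorm_inner:
  fixes A :: "'a::euclidean_space \<Rightarrow> 'b::euclidean_space"
  assumes "linear A"
  shows "norm (adjoint A p) \<le> onorm (\<lambda>h. p \<bullet> A h)"
proof -
  define a where "a = adjoint A p"
  have "bounded_linear (\<lambda>h. p \<bullet> A h)"
    using assms by (intro bounded_linear_compose[OF bounded_linear_inner_right] linear_conv_bounded_linear[THEN iffD1])
  have "(norm a)\<^sup>2 = p \<bullet> A a"
    using adjoint_clauses(1)[OF assms, of a p] by (simp add: a_def power2_norm_eq_inner inner_commute)
  also have "\<dots> \<le> onorm (\<lambda>h. p \<bullet> A h) * norm a"
    using onorm[OF \<open>bounded_linear (\<lambda>h. p \<bullet> A h)\<close>, of a] by simp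
  finally show ?thesis
    by (cases "a = 0") (auto simp: a_def power2_eq_square onorm_pos_le[OF \<open>bounded_linear (\<lambda>h. p \<bullet> A h)\<close>])
qed

lemma adjoint_complex:
  assumes "linear (A :: complex \<Rightarrow> complex)"
  shows "adjoint A p = Complex (A 1 \<bullet> p) (A \<i> \<bullet> p)"
  using adjoint_clauses(1)[OF assms, of 1 p] adjoint_clauses(1)[OF assms, of \<i> p]
  by (simp add: complex_eq_iff inner_complex_def)

lemma Im_cnj_mult_adjoint:
  assumes "linear (A :: complex \<Rightarrow> complex)" "norm p = 1"
  shows "Im (cnj (A 1) * A \<i>) = Im (cnj (adjoint A p) * adjoint A (\<i> * p))"
proof -
  have "(Re p)\<^sup>2 + (Im p)\<^sup>2 = 1" using assms(2) by (simp add: cmod_def)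
  then show ?thesis
    unfolding adjoint_complex[OF assms(1)]
    by (simp add: inner_complex_def power2_eq_square) algebra
qed

lemma onorm_complex_le_sqrt:
  assumes "bounded_linear (A :: complex \<Rightarrow> complex)"
  shows "onorm A \<le> sqrt ((norm (A 1))\<^sup>2 + (norm (A \<i>))\<^sup>2)"
proof (rule onorm_le)
  fix h :: complex
  have "A h = Re h *\<^sub>R A 1 + Im h *\<^sub>R A \<i>"
    using linear_add[OF bounded_linear.linear[OF assms]] linear_scale[OF bounded_linear.linear[OF assms]]
    by (metis complex_eq mult.commute mult.right_neutral scaleR_conv_of_real complex_scaleR)
  then have "norm (A h) \<le> Complex \<bar>Re h\<bar> \<bar>Im h\<bar> \<bullet> Complex (norm (A 1)) (norm (A \<i>))"
    by (simp add: inner_complex_def norm_triangle_le)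
  also have "\<dots> \<le> norm (Complex \<bar>Re h\<bar> \<bar>Im h\<bar>) * norm (Complex (norm (A 1)) (norm (A \<i>)))"
    by (rule norm_cauchy_schwarz)
  finally show "norm (A h) \<le> sqrt ((norm (A 1))\<^sup>2 + (norm (A \<i>))\<^sup>2) * norm h"
    by (simp add: cmod_def mult.commute)
qed

lemma le_of_sq_le_linear:
  fixes \<sigma> b c :: real
  assumes "0 \<le> b" "0 \<le> c" "\<sigma>\<^sup>2 \<le> b * \<sigma> + c"
  shows "\<sigma> \<le> b + sqrt c"
proof (rule ccontr)
  assume "\<not> \<sigma> \<le> b + sqrt c"
  then have "\<sigma> > b + sqrt c" by simp
  moreover have "0 \<le> sqrt c" using assms(2) by simp
  ultimately have "\<sigma> > 0" using assms(1) by linarith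
  then have "\<sigma> * \<sigma> > \<sigma> * (b + sqrt c)" using \<open>\<sigma> > b + sqrt c\<close> by (intro mult_strict_left_mono)
  moreover have "\<sigma> * sqrt c \<ge> sqrt c * sqrt c"
    using \<open>\<sigma> > b + sqrt c\<close> assms by (intro mult_right_mono) auto
  ultimately show False
    using assms by (simp add: power2_eq_square algebra_simps)
qed

lemma onorm_neg_inner_comp_qc_bounds:
  fixes A :: "complex \<Rightarrow> complex"
  assumes A: "bounded_linear A" and "norm p = 1" "0 \<le> K" "0 \<le> K'"
    and qc: "(norm (A 1))\<^sup>2 + (norm (A \<i>))\<^sup>2 \<le> 2 * K * Im (cnj (A 1) * A \<i>) + K'"
  shows "onorm (\<lambda>h. - (p \<bullet> A h)) \<le> onorm A"
    and "onorm A \<le> 2 * K * onorm (\<lambda>h. - (p \<bullet> A h)) + sqrt K'"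
proof -
  have "linear A" using A by (rule bounded_linear.linear)
  have comp_le: "onorm (\<lambda>h. q \<bullet> A h) \<le> onorm A" if "norm q = 1" for q
    using onorm_inner_right[OF A, of q] that by simp
  define m \<sigma> where "m = onorm (\<lambda>h. - (p \<bullet> A h))" and "\<sigma> = onorm A"
  have m_eq: "m = onorm (\<lambda>h. p \<bullet> A h)" unfolding m_def by (rule onorm_neg)
  then show "m \<le> \<sigma>" using comp_le[OF \<open>norm p = 1\<close>] by (simp add: \<sigma>_def)
  have "0 \<le> m"
    using m_eq norm_adjoint_le_onorm_inner[OF \<open>linear A\<close>, of p] norm_ge_zero by (metis order_trans)
  have "Im (cnj (A 1) * A \<i>) \<le> norm (adjoint A p) * norm (adjoint A (\<i> * p))"
    using Im_cnj_mult_adjoint[OF \<open>linear A\<close> \<open>norm p = 1\<close>] abs_Im_le_cmod[of "cnj (adjoint A p) * adjoint A (\<i> * p)"]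
    by (simp add: norm_mult)
  also have "\<dots> \<le> m * \<sigma>"
    using norm_adjoint_le_onorm_inner[OF \<open>linear A\<close>, of p] norm_adjoint_le_onorm_inner[OF \<open>linear A\<close>, of "\<i> * p"]
      comp_le[of "\<i> * p"] \<open>norm p = 1\<close> \<open>0 \<le> m\<close>
    by (intro mult_mono) (auto simp: m_eq \<sigma>_def norm_mult)
  finally have J_le: "Im (cnj (A 1) * A \<i>) \<le> m * \<sigma>" .
  have "\<sigma>\<^sup>2 \<le> (norm (A 1))\<^sup>2 + (norm (A \<i>))\<^sup>2"
    using power_mono[OF onorm_complex_le_sqrt[OF A] onorm_pos_le[OF A], of 2] by (simp add: \<sigma>_def)
  also have "\<dots> \<le> 2 * K * (m * \<sigma>) + K'"
    using qc mult_left_mono[OF J_le, of "2 * K"] \<open>0 \<le> K\<close> by simp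
  finally have "\<sigma>\<^sup>2 \<le> 2 * K * m * \<sigma> + K'" by (simp add: mult.assoc)
  then show "\<sigma> \<le> 2 * K * m + sqrt K'"
    using \<open>0 \<le> K\<close> \<open>0 \<le> K'\<close> \<open>0 \<le> m\<close> by (intro le_of_sq_le_linear) auto
qed

section \<open>Quasiconformal mappings\<close>

lemma has_vector_derivative_along_line:
  assumes "(w has_derivative A) (at z)"
  shows "((\<lambda>t. w (z + t *\<^sub>R v)) has_vector_derivative A v) (at 0)"
proof -
  have "((\<lambda>t. z + t *\<^sub>R v) has_derivative (\<lambda>t. t *\<^sub>R v)) (at 0)"
    by (auto intro!: derivative_eq_intros)
  from has_derivative_compose[OF this] assms
  have "((\<lambda>t. w (z + t *\<^sub>R v)) has_derivative (\<lambda>t. A (t *\<^sub>R v))) (at 0)" by simp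
  then show ?thesis
    using linear_scale[OF has_derivative_linear[OF assms]] by (simp add: has_vector_derivative_def)
qed

lemma partials_at_derivative:
  assumes "(w has_derivative A) (at z)" "partials_at w z wx wy"
  shows "wx = A 1" "wy = A \<i>"
proof -
  have "((\<lambda>t. w (z + of_real t)) has_vector_derivative A 1) (at 0)"
    using has_vector_derivative_along_line[OF assms(1), of 1] by (simp add: scaleR_conv_of_real)
  moreover have "((\<lambda>t. w (z + \<i> * of_real t)) has_vector_derivative A \<i>) (at 0)"
    using has_vector_derivative_along_line[OF assms(1), of \<i>] by (simp add: scaleR_conv_of_real mult.commute)
  ultimately show "wx = A 1" "wy = A \<i>"
    using assms(2) by (auto simp: partials_at_def intro: vector_derivative_unique_at)
qed

lemma frontier_inside_path_image:
  fixes g :: "real \<Rightarrow> 'a::euclidean_space"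
  assumes "path g" "x \<in> inside (path_image g)"
  shows "compact (frontier (inside (path_image g)))" "frontier (inside (path_image g)) \<noteq> {}"
    "x \<notin> frontier (inside (path_image g))"
proof -
  have "compact (path_image g)" using assms(1) by (rule compact_path_image)
  have bounded: "bounded (inside (path_image g))"
    by (rule bounded_inside[OF compact_imp_bounded]) fact
  have "open (inside (path_image g))"
    by (rule open_inside[OF compact_imp_closed]) fact
  from bounded show "compact (frontier (inside (path_image g)))"
    by (simp add: compact_frontier_bounded)
  show "frontier (inside (path_image g)) \<noteq> {}"
    using assms(2) bounded not_bounded_UNIV by (auto simp: frontier_eq_empty)
  show "x \<notin> frontier (inside (path_image g))"
    using assms(2) \<open>open (inside (path_image g))\<close> by (simp add: frontier_def interior_open)
qed

lemma neg_infdist_comp_qc_bounds: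
  fixes w :: "complex \<Rightarrow> complex"
  assumes w: "(w has_derivative Dw) (at z)" and "compact F" "F \<noteq> {}" "w z \<notin> F"
    and unique: "\<And>g1 g2. frechet_subgradient (\<lambda>u. - infdist (w u) F) z g1 \<Longrightarrow>
                         frechet_subgradient (\<lambda>u. - infdist (w u) F) z g2 \<Longrightarrow> g1 = g2"
    and "partials_at w z wx wy" and qc: "(norm wx)\<^sup>2 + (norm wy)\<^sup>2 \<le> 2 * K * jac wx wy + K'"
    and "0 \<le> K" "0 \<le> K'"
  shows "\<exists>D\<chi>. ((\<lambda>u. - infdist (w u) F) has_derivative D\<chi>) (at z) \<and>
                onorm D\<chi> \<le> onorm Dw \<and> onorm Dw \<le> 2 * K * onorm D\<chi> + sqrt K'"
proof -
  obtain p where "norm p = 1" and "((\<lambda>u. - infdist (w u) F) has_derivative (\<lambda>h. - (p \<bullet> Dw h))) (at z)"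
    using has_derivative_neg_infdist_comp[OF w \<open>compact F\<close> \<open>F \<noteq> {}\<close> \<open>w z \<notin> F\<close> unique] by blast
  moreover have "(norm (Dw 1))\<^sup>2 + (norm (Dw \<i>))\<^sup>2 \<le> 2 * K * Im (cnj (Dw 1) * Dw \<i>) + K'"
    using qc partials_at_derivative[OF w \<open>partials_at w z wx wy\<close>] by (simp add: jac_def)
  ultimately show ?thesis
    using onorm_neg_inner_comp_qc_bounds[OF has_derivative_bounded_linear[OF w]] \<open>0 \<le> K\<close> \<open>0 \<le> K'\<close>
    by blast
qed

theorem lemma3p2:
  fixes \<gamma>1 \<gamma>2 :: "real \<Rightarrow> complex"
    and \<Omega>1 \<Omega>2 \<Omega> D :: "complex set"
    and w :: "complex \<Rightarrow> complex"
    and K K' \<kappa>0 \<mu> :: real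
    and d1 :: "complex \<Rightarrow> real"
  assumes "C2_jordan_curve \<gamma>1" and "C2_jordan_curve \<gamma>2"
    and "\<Omega>1 = inside (path_image \<gamma>1)" and "\<Omega>2 = inside (path_image \<gamma>2)"
    and "closure \<Omega>2 \<subseteq> \<Omega>1"
    and "\<Omega> = \<Omega>1 - closure \<Omega>2"
    and "\<And>v. d1 v = infdist v (frontier \<Omega>1)"
    and "\<kappa>0 = (SUP t\<in>{0..1}. \<bar>curvature \<gamma>1 t\<bar>)"
    and "0 < \<mu>" and "\<mu> < 1 / \<kappa>0"
    and "open D" and "connected D"
    and "w ` D \<subseteq> \<Omega>"
    and "KK_qc_on K K' D w"
  shows "AE z in lebesgue. z \<in> D \<and> w z \<in> {v \<in> \<Omega>. d1 v \<le> \<mu>} \<longrightarrow>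
           (\<forall>Dw. (w has_derivative Dw) (at z) \<longrightarrow>
              (\<exists>D\<chi>. ((\<lambda>u. - d1 (w u)) has_derivative D\<chi>) (at z) \<and>
                  onorm D\<chi> \<le> onorm Dw \<and>
                  onorm Dw \<le> 2 * K * onorm D\<chi> + sqrt K'))"
proof -
  define F where "F = frontier \<Omega>1"
  have "path \<gamma>1" using \<open>C2_jordan_curve \<gamma>1\<close> by (simp add: C2_jordan_curve_def simple_path_imp_path)
  have \<chi>_eq: "(\<lambda>u. - d1 (w u)) = (\<lambda>u. - infdist (w u) F)" using assms(7) by (simp add: F_def)
  define N where "N = {z. \<exists>g1 g2. g1 \<noteq> g2 \<and> frechet_subgradient (\<lambda>u. - infdist (w u) F) z g1 \<and>
                                                frechet_subgradient (\<lambda>u. - infdist (w u) F) z g2}"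
  have null: "N \<in> null_sets lebesgue"
    unfolding N_def negligible_iff_null_sets[symmetric] by (rule negligible_nonunique_frechet_subgradient)
  have "1 \<le> K" "0 \<le> K'" and qc_AE: "AE z in lebesgue. z \<in> D \<longrightarrow>
      (\<exists>wx wy. partials_at w z wx wy \<and> 0 \<le> jac wx wy \<and> (norm wx)\<^sup>2 + (norm wy)\<^sup>2 \<le> 2 * K * jac wx wy + K')"
    using \<open>KK_qc_on K K' D w\<close> by (simp_all add: KK_qc_on_def)
  from AE_not_in[OF null] qc_AE show ?thesis
  proof (eventually_elim, intro impI allI)
    fix z Dw
    assume "z \<notin> N" and qc: "z \<in> D \<longrightarrow> (\<exists>wx wy. partials_at w z wx wy \<and> 0 \<le> jac wx wy \<and>
                                 (norm wx)\<^sup>2 + (norm wy)\<^sup>2 \<le> 2 * K * jac wx wy + K')"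
      and z: "z \<in> D \<and> w z \<in> {v \<in> \<Omega>. d1 v \<le> \<mu>}" and "(w has_derivative Dw) (at z)"
    have "w z \<in> inside (path_image \<gamma>1)" using z assms(3,6) by auto
    note F_props = frontier_inside_path_image[OF \<open>path \<gamma>1\<close> this, folded assms(3) F_def]
    obtain wx wy where "partials_at w z wx wy" "(norm wx)\<^sup>2 + (norm wy)\<^sup>2 \<le> 2 * K * jac wx wy + K'"
      using qc z by blast
    moreover have "g1 = g2" if "frechet_subgradient (\<lambda>u. - infdist (w u) F) z g1"
      "frechet_subgradient (\<lambda>u. - infdist (w u) F) z g2" for g1 g2
      using that \<open>z \<notin> N\<close> by (auto simp: N_def)
    ultimately show "\<exists>D\<chi>. ((\<lambda>u. - d1 (w u)) has_derivative D\<chi>) (at z) \<and>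
                onorm D\<chi> \<le> onorm Dw \<and> onorm Dw \<le> 2 * K * onorm D\<chi> + sqrt K'"
      unfolding \<chi>_eq using \<open>1 \<le> K\<close> \<open>0 \<le> K'\<close>
      by (intro neg_infdist_comp_qc_bounds[OF \<open>(w has_derivative Dw) (at z)\<close> F_props]) auto
  qed
qed

end
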